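(* Consider the online multiple testing protocol described in the context, in a stationary environment in which the true states $Y_1,Y_2,\dots$ are i.i.d. $\mathrm{Bernoulli}(1-\pi)$ for a constant $\pi\in(0,1)$ (so $\mathbb{P}(Y_t=0)=\pi$). Let $\beta\in(0,1]$ and $\lambda_\beta:=G^{-1}(\beta)>0$. Suppose the algorithm maintains minimum detection power $\beta$, i.e. $G(\lambda_t)\ge\beta$, equivalently $\lambda_t\ge\lambda_\beta$, almost surely for all $t$. Then for every $T\ge1$ and all $a,b>0$, $$\mathbb{E}[\mathrm{Regret}_T(a,b)]\ \ge\ a\,\pi\,\lambda_\beta\,T=\Omega(T),$$ and moreover $$\liminf_{T\to\infty}\frac1T\,\mathrm{Regret}_T(a,b)\ \ge\ a\,\pi\,\lambda_\beta\quad\text{almost surely.}$$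
   Context: Online multiple testing protocol: at each round $t=1,2,\dots$ the environment has a true state $Y_t\in\{0,1\}$ ($0$ = null, $1$ = alternative) and reveals a $p$-value $p_t\in[0,1]$; conditionally on the states and on the past, $p_t\sim\mathrm{Uniform}[0,1]$ if $Y_t=0$ and $p_t\sim G$ if $Y_t=1$, independently of past $p$-values and decisions. Here $G:[0,1]\to[0,1]$ is a continuous, strictly increasing CDF with $G(0)=0$, $G(1)=1$. With $\mathcal{F}_{t-1}=\sigma((p_s,\lambda_s,\delta_s):s\le t-1)$, the algorithm chooses an $\mathcal{F}_{t-1}$-measurable threshold $\lambda_t\in[0,1]$ and decides $\delta_t=\mathbf{1}\{p_t\le\lambda_t\}$ (reject iff $\delta_t=1$). Define false positives $V_T=\sum_{t=1}^T\mathbf{1}\{Y_t=0,\delta_t=1\}$, false negatives $M_T=\sum_{t=1}^T\mathbf{1}\{Y_t=1,\delta_t=0\}$, and for weights $a,b>0$ the Weighted Regret $\mathrm{Regret}_T(a,b)=a V_T+b M_T$. *)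

theory Defs
  imports "HOL-Probability.Probability"
begin

text \<open>Rounds are indexed from 0: round t of the paper is index t-1 here.
  Sigma algebra on the sample space generated by a family of real random variables.\<close>
definition gen_sigma :: "'a measure \<Rightarrow> ('a \<Rightarrow> real) set \<Rightarrow> 'a measure" where
  "gen_sigma M Fs = sigma (space M) {f -` B \<inter> space M | f B. f \<in> Fs \<and> B \<in> sets borel}"

definition rejects :: "(nat \<Rightarrow> 'a \<Rightarrow> real) \<Rightarrow> (nat \<Rightarrow> 'a \<Rightarrow> real) \<Rightarrow> nat \<Rightarrow> 'a \<Rightarrow> bool" where
  "rejects p lam t \<omega> \<longleftrightarrow> p t \<omega> \<le> lam t \<omega>"

definition past_vars :: "(nat \<Rightarrow> 'a \<Rightarrow> real) \<Rightarrow> (nat \<Rightarrow> 'a \<Rightarrow> real) \<Rightarrow> nat \<Rightarrow> ('a \<Rightarrow> real) set" where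
  "past_vars p lam t = {p s | s. s < t} \<union> {lam s | s. s < t}
      \<union> {(\<lambda>\<omega>. of_bool (rejects p lam s \<omega>)) | s. s < t}"

text \<open>The filtration F_{t-1}: information available before round t.\<close>
definition past_filtration :: "'a measure \<Rightarrow> (nat \<Rightarrow> 'a \<Rightarrow> real) \<Rightarrow> (nat \<Rightarrow> 'a \<Rightarrow> real) \<Rightarrow> nat \<Rightarrow> 'a measure" where
  "past_filtration M p lam t = gen_sigma M (past_vars p lam t)"

definition cond_sigma :: "'a measure \<Rightarrow> (nat \<Rightarrow> 'a \<Rightarrow> nat) \<Rightarrow> (nat \<Rightarrow> 'a \<Rightarrow> real) \<Rightarrow> (nat \<Rightarrow> 'a \<Rightarrow> real) \<Rightarrow> nat \<Rightarrow> 'a measure" where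
  "cond_sigma M Y p lam t = gen_sigma M ({(\<lambda>\<omega>. real (Y s \<omega>)) | s. True} \<union> past_vars p lam t)"

definition false_pos :: "(nat \<Rightarrow> 'a \<Rightarrow> nat) \<Rightarrow> (nat \<Rightarrow> 'a \<Rightarrow> real) \<Rightarrow> (nat \<Rightarrow> 'a \<Rightarrow> real) \<Rightarrow> nat \<Rightarrow> 'a \<Rightarrow> nat" where
  "false_pos Y p lam T \<omega> = card {t. t < T \<and> Y t \<omega> = 0 \<and> rejects p lam t \<omega>}"

definition false_neg :: "(nat \<Rightarrow> 'a \<Rightarrow> nat) \<Rightarrow> (nat \<Rightarrow> 'a \<Rightarrow> real) \<Rightarrow> (nat \<Rightarrow> 'a \<Rightarrow> real) \<Rightarrow> nat \<Rightarrow> 'a \<Rightarrow> nat" where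
  "false_neg Y p lam T \<omega> = card {t. t < T \<and> Y t \<omega> = 1 \<and> \<not> rejects p lam t \<omega>}"

definition weighted_regret :: "real \<Rightarrow> real \<Rightarrow> (nat \<Rightarrow> 'a \<Rightarrow> nat) \<Rightarrow> (nat \<Rightarrow> 'a \<Rightarrow> real) \<Rightarrow> (nat \<Rightarrow> 'a \<Rightarrow> real) \<Rightarrow> nat \<Rightarrow> 'a \<Rightarrow> real" where
  "weighted_regret a b Y p lam T \<omega> = a * real (false_pos Y p lam T \<omega>) + b * real (false_neg Y p lam T \<omega>)"

end

theory Submission
  imports Defs "HOL-Library.Discrete_Functions"
begin

(* Since G is strictly increasing, minimum power forces lam t \<ge> lb, so every null round whose
   p-value is at most lb is a false discovery, and Regret_T \<ge> a * #{t < T. Y t = 0, p t \<le> lb}.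
   Each of these events has probability lb * \<pi>, which gives the bound in expectation.  They are
   moreover pairwise uncorrelated: given the states and the past, a later null p-value is still
   uniform, and the states are independent.  The L2 strong law for bounded uncorrelated
   variables (Chebyshev along the squares, Borel-Cantelli, interpolation between squares) then
   makes their frequency converge to lb * \<pi> almost surely. *)

lemma abs_diff_le_of_bounded_increments:
  fixes s :: "nat \<Rightarrow> real"
  assumes "\<And>n. \<bar>s (Suc n) - s n\<bar> \<le> 1"
  shows "\<bar>s (m + d) - s m\<bar> \<le> real d"
proof (induction d)
  case (Suc d)
  have "\<bar>s (Suc (m + d)) - s (m + d)\<bar> \<le> 1" by (rule assms)
  with Suc show ?case by simp
qed simp

lemma abs_div_le_at_floor_sqrt:
  fixes s :: "nat \<Rightarrow> real"
  assumes incr: "\<And>n. \<bar>s (Suc n) - s n\<bar> \<le> 1" and "n \<ge> 1"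
  defines "k \<equiv> floor_sqrt n"
  shows "\<bar>s n / real n\<bar> \<le> \<bar>s (k\<^sup>2) / real (k\<^sup>2)\<bar> + 2 / real k"
proof -
  have k_pos: "real k > 0" using \<open>n \<ge> 1\<close> by (simp add: k_def)
  have k_sq: "k\<^sup>2 \<le> n" by (simp add: k_def)
  have "n - k\<^sup>2 \<le> 2 * k"
    using Suc_floor_sqrt_power2_gt[of n] by (simp add: k_def power2_eq_square)
  then have gap: "real (n - k\<^sup>2) \<le> 2 * real k"
    by (metis of_nat_le_iff of_nat_mult of_nat_numeral)
  have "\<bar>s (k\<^sup>2 + (n - k\<^sup>2)) - s (k\<^sup>2)\<bar> \<le> real (n - k\<^sup>2)"
    by (rule abs_diff_le_of_bounded_increments[of s, OF incr])
  then have "\<bar>s n - s (k\<^sup>2)\<bar> \<le> real (n - k\<^sup>2)"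
    by (simp only: le_add_diff_inverse[OF k_sq])
  with gap have s_n: "\<bar>s n\<bar> \<le> \<bar>s (k\<^sup>2)\<bar> + 2 * real k"
    by linarith
  have "\<bar>s n / real n\<bar> \<le> \<bar>s n\<bar> / real (k\<^sup>2)"
    using k_sq k_pos \<open>n \<ge> 1\<close> by (simp add: abs_div) (intro divide_left_mono; simp)
  also have "\<dots> \<le> (\<bar>s (k\<^sup>2)\<bar> + 2 * real k) / real (k\<^sup>2)"
    using s_n k_pos by (simp add: divide_right_mono)
  also have "\<dots> = \<bar>s (k\<^sup>2) / real (k\<^sup>2)\<bar> + 2 / real k"
    using k_pos by (simp add: field_simps power2_eq_square)
  finally show ?thesis .
qed

lemma LIMSEQ_div_of_LIMSEQ_at_squares:
  fixes s :: "nat \<Rightarrow> real"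
  assumes incr: "\<And>n. \<bar>s (Suc n) - s n\<bar> \<le> 1"
    and lim: "(\<lambda>k. s (k\<^sup>2) / real (k\<^sup>2)) \<longlonglongrightarrow> 0"
  shows "(\<lambda>n. s n / real n) \<longlonglongrightarrow> 0"
proof (rule Lim_null_comparison)
  have k: "filterlim floor_sqrt at_top sequentially"
    unfolding filterlim_at_top
  proof
    fix c :: nat
    show "eventually (\<lambda>n. c \<le> floor_sqrt n) sequentially"
      using eventually_ge_at_top[of "c\<^sup>2"] by eventually_elim (rule le_floor_sqrtI)
  qed
  show "(\<lambda>n. \<bar>s (floor_sqrt n ^ 2) / real (floor_sqrt n ^ 2)\<bar> + 2 / real (floor_sqrt n))
      \<longlonglongrightarrow> 0"
    using tendsto_add[OF tendsto_rabs[OF filterlim_compose[OF lim k]]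
        filterlim_compose[OF lim_const_over_n k]]
    by simp
  show "\<forall>\<^sub>F n in sequentially. norm (s n / real n)
      \<le> \<bar>s (floor_sqrt n ^ 2) / real (floor_sqrt n ^ 2)\<bar> + 2 / real (floor_sqrt n)"
    using eventually_ge_at_top[of 1]
    by eventually_elim (unfold real_norm_def, rule abs_div_le_at_floor_sqrt[of s, OF incr])
qed

lemma AE_LIMSEQ_zeroI:
  fixes f :: "nat \<Rightarrow> 'a \<Rightarrow> real"
  assumes "\<And>e. e > 0 \<Longrightarrow> AE \<omega> in M. eventually (\<lambda>n. \<bar>f n \<omega>\<bar> < e) sequentially"
  shows "AE \<omega> in M. (\<lambda>n. f n \<omega>) \<longlonglongrightarrow> 0"
proof -
  have "AE \<omega> in M. \<forall>m. eventually (\<lambda>n. \<bar>f n \<omega>\<bar> < inverse (real (Suc m))) sequentially"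
    unfolding AE_all_countable using assms by simp
  then show ?thesis
  proof eventually_elim
    case (elim \<omega>)
    show ?case
      unfolding tendsto_iff
    proof (intro allI impI)
      fix r :: real assume "r > 0"
      then obtain m where "inverse (real (Suc m)) < r"
        using reals_Archimedean by blast
      with elim[rule_format, of m] show "\<forall>\<^sub>F n in sequentially. dist (f n \<omega>) 0 < r"
        by (auto elim: eventually_mono)
    qed
  qed
qed

locale bounded_uncorrelated = prob_space +
  fixes X :: "nat \<Rightarrow> 'a \<Rightarrow> real"
  assumes measurable_X [measurable]: "\<And>t. X t \<in> borel_measurable M"
    and abs_X_le_1: "\<And>t \<omega>. \<omega> \<in> space M \<Longrightarrow> \<bar>X t \<omega>\<bar> \<le> 1"
    and uncorrelated: "\<And>i l. i < l \<Longrightarrow> expectation (\<lambda>\<omega>. X l \<omega> * X i \<omega>) = 0"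
begin

lemma measurable_sum [measurable]: "(\<lambda>\<omega>. \<Sum>t<n. X t \<omega>) \<in> borel_measurable M"
  by (intro borel_measurable_sum measurable_X)

lemma integrable_square_sum: "integrable M (\<lambda>\<omega>. (\<Sum>t<n. X t \<omega>)\<^sup>2)"
proof (rule integrable_const_bound[where B = "real n ^ 2"])
  have "(\<Sum>t<n. X t \<omega>)\<^sup>2 \<le> real n ^ 2" if "\<omega> \<in> space M" for \<omega>
  proof -
    have "\<bar>\<Sum>t<n. X t \<omega>\<bar> \<le> real n"
      using order_trans[OF sum_abs sum_bounded_above[of "{..<n}", OF abs_X_le_1[OF that]]]
      by simp
    then have "\<bar>\<Sum>t<n. X t \<omega>\<bar>\<^sup>2 \<le> real n ^ 2"
      by (intro power_mono) simp_all
    then show ?thesis by simp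
  qed
  then show "AE \<omega> in M. norm ((\<Sum>t<n. X t \<omega>)\<^sup>2) \<le> real n ^ 2"
    by (auto intro!: AE_I2)
qed measurable

lemma integrable_product: "integrable M (\<lambda>\<omega>. X l \<omega> * X i \<omega>)"
  by (rule integrable_const_bound[where B = 1])
    (auto simp: abs_mult intro!: AE_I2 mult_le_one abs_X_le_1)

lemma expectation_square_sum_le: "expectation (\<lambda>\<omega>. (\<Sum>t<n. X t \<omega>)\<^sup>2) \<le> real n"
proof (induction n)
  case (Suc n)
  have "(\<Sum>t<Suc n. X t \<omega>)\<^sup>2
      = (\<Sum>t<n. X t \<omega>)\<^sup>2 + 2 * (\<Sum>i<n. X n \<omega> * X i \<omega>) + X n \<omega> * X n \<omega>" for \<omega>
    by (simp add: power2_eq_square sum_distrib_left algebra_simps)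
  then have "expectation (\<lambda>\<omega>. (\<Sum>t<Suc n. X t \<omega>)\<^sup>2)
      = expectation (\<lambda>\<omega>. (\<Sum>t<n. X t \<omega>)\<^sup>2) + 2 * (\<Sum>i<n. expectation (\<lambda>\<omega>. X n \<omega> * X i \<omega>))
        + expectation (\<lambda>\<omega>. X n \<omega> * X n \<omega>)"
    by (simp add: integrable_square_sum integrable_product Bochner_Integration.integral_sum)
  also have "(\<Sum>i<n. expectation (\<lambda>\<omega>. X n \<omega> * X i \<omega>)) = 0"
    by (simp add: uncorrelated)
  also have "expectation (\<lambda>\<omega>. X n \<omega> * X n \<omega>) \<le> expectation (\<lambda>\<omega>. 1)"
    by (intro integral_mono integrable_product)
      (simp_all add: abs_X_le_1 abs_square_le_1 flip: power2_eq_square)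
  finally show ?case using Suc by (simp add: prob_space)
qed simp

lemma AE_eventually_small_at_squares:
  assumes "e > 0"
  shows "AE \<omega> in M. eventually
    (\<lambda>k. \<bar>(\<Sum>t<(Suc k)\<^sup>2. X t \<omega>) / real ((Suc k)\<^sup>2)\<bar> < e) sequentially"
proof -
  define A where "A k = {\<omega> \<in> space M. e * real ((Suc k)\<^sup>2) \<le> \<bar>\<Sum>t<(Suc k)\<^sup>2. X t \<omega>\<bar>}" for k
  have [measurable]: "A k \<in> events" for k unfolding A_def by measurable
  have prob_A: "prob (A k) \<le> inverse (e\<^sup>2) * inverse (real (Suc k) ^ 2)" for k
  proof -
    have "prob (A k) \<le> expectation (\<lambda>\<omega>. (\<Sum>t<(Suc k)\<^sup>2. X t \<omega>)\<^sup>2) / (e * real ((Suc k)\<^sup>2))\<^sup>2"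
      unfolding A_def using \<open>e > 0\<close>
      by (intro second_moment_method measurable_sum integrable_square_sum) simp
    also have "\<dots> \<le> real ((Suc k)\<^sup>2) / (e * real ((Suc k)\<^sup>2))\<^sup>2"
      by (intro divide_right_mono expectation_square_sum_le) simp
    also have "\<dots> = inverse (e\<^sup>2) * inverse (real (Suc k) ^ 2)"
    proof -
      have "N / (e * N)\<^sup>2 = inverse (e\<^sup>2) * inverse N" if "N > 0" for N :: real
        using that \<open>e > 0\<close> by (simp add: power2_eq_square field_simps)
      from this[of "real (Suc k) ^ 2"] show ?thesis by simp
    qed
    finally show ?thesis .
  qed
  have "summable (\<lambda>k. inverse (e\<^sup>2) * inverse (real (Suc k) ^ 2))"
    by (intro summable_mult summable_Suc_iff[where f = "\<lambda>n. inverse (real n ^ 2)", THEN iffD2]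
        inverse_power_summable) simp
  then have "summable (\<lambda>k. prob (A k))"
    by (rule summable_comparison_test'[where N = 0]) (use prob_A in auto)
  then have "AE \<omega> in M. eventually (\<lambda>k. \<omega> \<in> space M - A k) sequentially"
    by (intro borel_cantelli_AE1) (auto simp: emeasure_eq_measure)
  then show ?thesis
    by eventually_elim
      (auto elim!: eventually_mono simp: A_def abs_div pos_divide_less_eq mult.commute)
qed

theorem strong_law: "AE \<omega> in M. (\<lambda>n. (\<Sum>t<n. X t \<omega>) / real n) \<longlonglongrightarrow> 0"
proof -
  have "AE \<omega> in M. (\<lambda>k. (\<Sum>t<(Suc k)\<^sup>2. X t \<omega>) / real ((Suc k)\<^sup>2)) \<longlonglongrightarrow> 0"
    by (rule AE_LIMSEQ_zeroI) (rule AE_eventually_small_at_squares)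
  then show ?thesis
  proof (rule AE_mp, intro AE_I2 impI)
    fix \<omega> assume "\<omega> \<in> space M"
      and lim: "(\<lambda>k. (\<Sum>t<(Suc k)\<^sup>2. X t \<omega>) / real ((Suc k)\<^sup>2)) \<longlonglongrightarrow> 0"
    have "\<bar>(\<Sum>t<Suc n. X t \<omega>) - (\<Sum>t<n. X t \<omega>)\<bar> \<le> 1" for n
      using abs_X_le_1[OF \<open>\<omega> \<in> space M\<close>] by simp
    moreover have "(\<lambda>k. (\<Sum>t<k\<^sup>2. X t \<omega>) / real (k\<^sup>2)) \<longlonglongrightarrow> 0"
      by (rule LIMSEQ_imp_Suc) (rule lim)
    ultimately show "(\<lambda>n. (\<Sum>t<n. X t \<omega>) / real n) \<longlonglongrightarrow> 0"
      by (rule LIMSEQ_div_of_LIMSEQ_at_squares)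
  qed
qed

end

lemma (in prob_space) AE_frequency_tendsto_of_uncorrelated_events:
  assumes E_events [measurable]: "\<And>t. E t \<in> events"
    and prob_E: "\<And>t. prob (E t) = q"
    and prob_Int: "\<And>i l. i < l \<Longrightarrow> prob (E i \<inter> E l) = q\<^sup>2"
  shows "AE \<omega> in M. (\<lambda>n. (\<Sum>t<n. indicator (E t) \<omega>) / real n) \<longlonglongrightarrow> q"
proof -
  have q: "0 \<le> q" "q \<le> 1" using prob_E[of 0] by auto
  have "expectation (\<lambda>\<omega>. (indicator (E l) \<omega> - q) * (indicator (E i) \<omega> - q)) = 0"
    if "i < l" for i l
  proof -
    have "(indicator (E l) \<omega> - q) * (indicator (E i) \<omega> - q)
        = indicator (E i \<inter> E l) \<omega> - q * indicator (E l) \<omega> - q * indicator (E i) \<omega> + q\<^sup>2"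
      for \<omega> :: 'a
      by (simp add: indicator_def power2_eq_square algebra_simps)
    moreover have "E i \<inter> E l \<in> events" by measurable
    ultimately show ?thesis
      using prob_Int[OF that]
      by (simp add: E_events prob_E prob_space power2_eq_square emeasure_eq_measure sets.Int_space_eq2)
  qed
  then interpret bounded_uncorrelated M "\<lambda>t \<omega>. indicator (E t) \<omega> - q"
  proof unfold_locales
    show "(\<lambda>\<omega>. indicator (E t) \<omega> - q) \<in> borel_measurable M" for t
      by measurable
    show "\<bar>indicator (E t) \<omega> - q\<bar> \<le> 1" for t \<omega>
      using q by (simp add: indicator_def)
  qed
  from strong_law show ?thesis
  proof eventually_elim
    case (elim \<omega>)
    have "(\<lambda>n. (\<Sum>t<n. indicator (E t) \<omega> - q) / real n + q) \<longlonglongrightarrow> 0 + q"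
      using elim by (rule tendsto_add[OF _ tendsto_const])
    moreover have "\<forall>\<^sub>F n in sequentially.
        (\<Sum>t<n. indicator (E t) \<omega> - q) / real n + q = (\<Sum>t<n. indicator (E t) \<omega>) / real n"
      using eventually_ge_at_top[of 1]
      by eventually_elim (simp add: sum_subtractf field_simps)
    ultimately show ?case
      by (simp add: Lim_transform_eventually)
  qed
qed

lemma Liminf_ereal_ge_of_tendsto:
  fixes f g :: "'b \<Rightarrow> real"
  assumes "(f \<longlongrightarrow> L) F" "F \<noteq> bot" "eventually (\<lambda>n. f n \<le> g n) F"
  shows "ereal L \<le> Liminf F (\<lambda>n. ereal (g n))"
proof -
  have "ereal L = Liminf F (\<lambda>n. ereal (f n))"
    using assms(1,2) by (intro lim_imp_Liminf[symmetric]) auto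
  also have "\<dots> \<le> Liminf F (\<lambda>n. ereal (g n))"
    using assms(3) by (intro Liminf_mono) (auto elim: eventually_mono)
  finally show ?thesis .
qed

lemma space_gen_sigma [simp]: "space (gen_sigma M Fs) = space M"
  unfolding gen_sigma_def by (rule space_measure_of) auto

lemma sets_gen_sigma:
  "sets (gen_sigma M Fs) = sigma_sets (space M) {f -` B \<inter> space M | f B. f \<in> Fs \<and> B \<in> sets borel}"
  unfolding gen_sigma_def by (rule sets_measure_of) auto

lemma space_in_gen_sigma: "space M \<in> sets (gen_sigma M Fs)"
  using sets.top[of "gen_sigma M Fs"] by simp

lemma vimage_in_gen_sigma:
  "f \<in> Fs \<Longrightarrow> B \<in> sets borel \<Longrightarrow> f -` B \<inter> space M \<in> sets (gen_sigma M Fs)"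
  unfolding sets_gen_sigma by (rule sigma_sets.Basic) blast

lemma subalgebra_gen_sigma:
  assumes "\<And>f. f \<in> Fs \<Longrightarrow> f \<in> borel_measurable M"
  shows "subalgebra M (gen_sigma M Fs)"
  unfolding subalgebra_def sets_gen_sigma
  using assms by (auto intro!: sets.sigma_sets_subset measurable_sets)

lemma threshold_measurable:
  assumes p_meas: "\<And>t. p t \<in> borel_measurable M"
    and lam_meas: "\<And>t. lam t \<in> borel_measurable (past_filtration M p lam t)"
  shows "lam t \<in> borel_measurable M"
proof (induction t rule: less_induct)
  case (less t)
  have "f \<in> borel_measurable M" if "f \<in> past_vars p lam t" for f
  proof -
    from that obtain s where "s < t" and
      "f = p s \<or> f = lam s \<or> f = (\<lambda>\<omega>. of_bool (rejects p lam s \<omega>))"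
      unfolding past_vars_def by blast
    moreover have [measurable]: "p s \<in> borel_measurable M" "lam s \<in> borel_measurable M"
      using p_meas less \<open>s < t\<close> by auto
    ultimately show ?thesis unfolding rejects_def by auto
  qed
  then have "subalgebra M (past_filtration M p lam t)"
    unfolding past_filtration_def by (rule subalgebra_gen_sigma)
  then show ?case using lam_meas by (rule measurable_from_subalg)
qed

lemma null_state_in_cond_sigma:
  "{\<omega> \<in> space M. Y s \<omega> = 0} \<in> sets (cond_sigma M Y p lam t)"
proof -
  have "(\<lambda>\<omega>. real (Y s \<omega>)) -` {0} \<inter> space M \<in> sets (cond_sigma M Y p lam t)"
    unfolding cond_sigma_def by (rule vimage_in_gen_sigma) auto
  moreover have "(\<lambda>\<omega>. real (Y s \<omega>)) -` {0} \<inter> space M = {\<omega> \<in> space M. Y s \<omega> = 0}"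
    by auto
  ultimately show ?thesis by simp
qed

lemma past_pvalue_in_cond_sigma:
  assumes "s < t"
  shows "{\<omega> \<in> space M. p s \<omega> \<le> x} \<in> sets (cond_sigma M Y p lam t)"
proof -
  have "p s -` {..x} \<inter> space M \<in> sets (cond_sigma M Y p lam t)"
    unfolding cond_sigma_def using assms
    by (intro vimage_in_gen_sigma) (auto simp: past_vars_def)
  moreover have "p s -` {..x} \<inter> space M = {\<omega> \<in> space M. p s \<omega> \<le> x}" by auto
  ultimately show ?thesis by simp
qed

text \<open>Any threshold of at least x turns this event into a false discovery.\<close>
definition null_below :: "'a measure \<Rightarrow> (nat \<Rightarrow> 'a \<Rightarrow> nat) \<Rightarrow> (nat \<Rightarrow> 'a \<Rightarrow> real) \<Rightarrow>
    real \<Rightarrow> nat \<Rightarrow> 'a set" where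
  "null_below M Y p x t = {\<omega> \<in> space M. Y t \<omega> = 0 \<and> p t \<omega> \<le> x}"

lemma null_below_in_sets:
  assumes "Y t \<in> measurable M (count_space UNIV)" "p t \<in> borel_measurable M"
  shows "null_below M Y p x t \<in> sets M"
  unfolding null_below_def using assms by measurable

lemma null_below_in_cond_sigma:
  assumes "s < t"
  shows "null_below M Y p x s \<in> sets (cond_sigma M Y p lam t)"
proof -
  have "null_below M Y p x s = {\<omega> \<in> space M. Y s \<omega> = 0} \<inter> {\<omega> \<in> space M. p s \<omega> \<le> x}"
    by (auto simp: null_below_def)
  then show ?thesis
    using sets.Int[OF null_state_in_cond_sigma past_pvalue_in_cond_sigma[OF assms]] by simp
qed

lemma (in prob_space) prob_null_below:
  assumes p_null: "\<And>A. A \<in> sets (cond_sigma M Y p lam t) \<Longrightarrow>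
      prob ({\<omega> \<in> space M. p t \<omega> \<le> x} \<inter> A \<inter> {\<omega> \<in> space M. Y t \<omega> = 0})
        = x * prob (A \<inter> {\<omega> \<in> space M. Y t \<omega> = 0})"
    and Y_null: "prob {\<omega> \<in> space M. Y t \<omega> = 0} = \<pi>"
  shows "prob (null_below M Y p x t) = x * \<pi>"
proof -
  have "null_below M Y p x t = {\<omega> \<in> space M. p t \<omega> \<le> x} \<inter> space M \<inter> {\<omega> \<in> space M. Y t \<omega> = 0}"
    by (auto simp: null_below_def)
  also have "prob \<dots> = x * prob (space M \<inter> {\<omega> \<in> space M. Y t \<omega> = 0})"
    by (rule p_null) (unfold cond_sigma_def, rule space_in_gen_sigma)
  also have "space M \<inter> {\<omega> \<in> space M. Y t \<omega> = 0} = {\<omega> \<in> space M. Y t \<omega> = 0}"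
    by auto
  finally show ?thesis by (simp add: Y_null)
qed

lemma (in prob_space) prob_null_below_Int:
  assumes Y_indep: "indep_vars (\<lambda>_. count_space UNIV) Y UNIV"
    and Y_null: "\<And>t. prob {\<omega> \<in> space M. Y t \<omega> = 0} = \<pi>"
    and p_null: "\<And>t A. A \<in> sets (cond_sigma M Y p lam t) \<Longrightarrow>
      prob ({\<omega> \<in> space M. p t \<omega> \<le> x} \<inter> A \<inter> {\<omega> \<in> space M. Y t \<omega> = 0})
        = x * prob (A \<inter> {\<omega> \<in> space M. Y t \<omega> = 0})"
    and "s < t"
  shows "prob (null_below M Y p x s \<inter> null_below M Y p x t) = (x * \<pi>)\<^sup>2"
proof -
  let ?null = "\<lambda>t. {\<omega> \<in> space M. Y t \<omega> = 0}"
  have vimage_null: "Y j -` {0} \<inter> space M = ?null j" for j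
    by auto
  have "prob (?null t \<inter> ?null s) = prob (\<Inter>j\<in>{t, s}. Y j -` {0} \<inter> space M)"
    by (simp add: vimage_null)
  also have "\<dots> = (\<Prod>j\<in>{t, s}. prob (Y j -` {0} \<inter> space M))"
    by (rule indep_varsD[OF Y_indep]) auto
  also have "\<dots> = \<pi> * \<pi>"
    using \<open>s < t\<close> by (simp add: vimage_null Y_null)
  finally have indep: "prob (?null t \<inter> ?null s) = \<pi> * \<pi>" .
  have "null_below M Y p x s \<inter> null_below M Y p x t
      = {\<omega> \<in> space M. p t \<omega> \<le> x} \<inter> null_below M Y p x s \<inter> ?null t"
    by (auto simp: null_below_def)
  also have "prob \<dots> = x * prob (null_below M Y p x s \<inter> ?null t)"
    by (rule p_null) (rule null_below_in_cond_sigma[OF \<open>s < t\<close>])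
  also have "null_below M Y p x s \<inter> ?null t = {\<omega> \<in> space M. p s \<omega> \<le> x} \<inter> ?null t \<inter> ?null s"
    by (auto simp: null_below_def)
  also have "prob \<dots> = x * prob (?null t \<inter> ?null s)"
    by (rule p_null) (rule null_state_in_cond_sigma)
  finally show ?thesis by (simp add: indep power2_eq_square)
qed

lemma false_pos_eq_sum:
  "real (false_pos Y p lam T \<omega>) = (\<Sum>t<T. of_bool (Y t \<omega> = 0 \<and> rejects p lam t \<omega>))"
proof -
  have "{t. t < T \<and> Y t \<omega> = 0 \<and> rejects p lam t \<omega>} = {..<T} \<inter> {t. Y t \<omega> = 0 \<and> rejects p lam t \<omega>}"
    by auto
  then show ?thesis unfolding false_pos_def by simp
qed

lemma false_neg_eq_sum:
  "real (false_neg Y p lam T \<omega>) = (\<Sum>t<T. of_bool (Y t \<omega> = 1 \<and> \<not> rejects p lam t \<omega>))"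
proof -
  have "{t. t < T \<and> Y t \<omega> = 1 \<and> \<not> rejects p lam t \<omega>} = {..<T} \<inter> {t. Y t \<omega> = 1 \<and> \<not> rejects p lam t \<omega>}"
    by auto
  then show ?thesis unfolding false_neg_def by simp
qed

lemma weighted_regret_measurable:
  assumes [measurable]: "\<And>t. Y t \<in> measurable M (count_space UNIV)"
    "\<And>t. p t \<in> borel_measurable M" "\<And>t. lam t \<in> borel_measurable M"
  shows "weighted_regret a b Y p lam T \<in> borel_measurable M"
proof -
  have "weighted_regret a b Y p lam T = (\<lambda>\<omega>.
      a * (\<Sum>t<T. of_bool (Y t \<omega> = 0 \<and> p t \<omega> \<le> lam t \<omega>))
      + b * (\<Sum>t<T. of_bool (Y t \<omega> = 1 \<and> \<not> p t \<omega> \<le> lam t \<omega>)))"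
    by (simp add: fun_eq_iff weighted_regret_def false_pos_eq_sum false_neg_eq_sum rejects_def)
  then show ?thesis by simp
qed

lemma abs_weighted_regret_le:
  "\<bar>weighted_regret a b Y p lam T \<omega>\<bar> \<le> (\<bar>a\<bar> + \<bar>b\<bar>) * real T"
proof -
  have "false_pos Y p lam T \<omega> \<le> card {..<T}" "false_neg Y p lam T \<omega> \<le> card {..<T}"
    unfolding false_pos_def false_neg_def by (rule card_mono; auto)+
  then have "\<bar>a\<bar> * real (false_pos Y p lam T \<omega>) + \<bar>b\<bar> * real (false_neg Y p lam T \<omega>)
      \<le> \<bar>a\<bar> * real T + \<bar>b\<bar> * real T"
    by (intro add_mono mult_left_mono) simp_all
  moreover have "\<bar>weighted_regret a b Y p lam T \<omega>\<bar>
      \<le> \<bar>a\<bar> * real (false_pos Y p lam T \<omega>) + \<bar>b\<bar> * real (false_neg Y p lam T \<omega>)"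
    unfolding weighted_regret_def by (rule order_trans[OF abs_triangle_ineq]) (simp add: abs_mult)
  ultimately show ?thesis by (simp add: distrib_right)
qed

lemma weighted_regret_ge_null_below:
  assumes "0 \<le> a" "0 \<le> b" and lam: "\<And>t. t < T \<Longrightarrow> x \<le> lam t \<omega>"
  shows "a * (\<Sum>t<T. indicator (null_below M Y p x t) \<omega>) \<le> weighted_regret a b Y p lam T \<omega>"
proof -
  have "(\<Sum>t<T. indicator (null_below M Y p x t) \<omega>)
      \<le> (\<Sum>t<T. of_bool (Y t \<omega> = 0 \<and> rejects p lam t \<omega>) :: real)"
    by (intro sum_mono) (auto simp: indicator_def null_below_def rejects_def intro: order_trans[OF _ lam])
  then have "a * (\<Sum>t<T. indicator (null_below M Y p x t) \<omega>) \<le> a * real (false_pos Y p lam T \<omega>)"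
    by (simp add: false_pos_eq_sum mult_left_mono \<open>0 \<le> a\<close>)
  moreover have "0 \<le> b * real (false_neg Y p lam T \<omega>)"
    using \<open>0 \<le> b\<close> by simp
  ultimately show ?thesis
    unfolding weighted_regret_def by linarith
qed

lemma AE_threshold_ge:
  fixes G :: "real \<Rightarrow> real" and lam :: "nat \<Rightarrow> 'a \<Rightarrow> real"
  assumes G: "strict_mono_on {0..1} G"
    and lam: "\<And>t \<omega>. \<omega> \<in> space M \<Longrightarrow> lam t \<omega> \<in> {0..1}" and "x \<in> {0..1}"
    and power: "\<And>t. AE \<omega> in M. G x \<le> G (lam t \<omega>)"
  shows "AE \<omega> in M. \<forall>t. x \<le> lam t \<omega>"
  unfolding AE_all_countable
proof
  fix t
  from power[of t] show "AE \<omega> in M. x \<le> lam t \<omega>"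
  proof (rule AE_mp, intro AE_I2 impI)
    fix \<omega> assume "\<omega> \<in> space M" "G x \<le> G (lam t \<omega>)"
    then show "x \<le> lam t \<omega>"
      using strict_mono_on_less_eq[OF G \<open>x \<in> {0..1}\<close> lam[OF \<open>\<omega> \<in> space M\<close>]] by blast
  qed
qed

lemma (in prob_space) expectation_weighted_regret_ge:
  assumes [measurable]: "\<And>t. Y t \<in> measurable M (count_space UNIV)"
      "\<And>t. p t \<in> borel_measurable M" "\<And>t. lam t \<in> borel_measurable M"
    and a_nonneg: "0 \<le> a" and b_nonneg: "0 \<le> b"
    and above: "AE \<omega> in M. \<forall>t. x \<le> lam t \<omega>"
    and prob_N: "\<And>t. prob (null_below M Y p x t) = q"
  shows "a * q * real T \<le> (\<integral>\<omega>. weighted_regret a b Y p lam T \<omega> \<partial>M)"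
proof -
  have integrable_N: "integrable M (indicator (null_below M Y p x t) :: 'a \<Rightarrow> real)" for t
    by (intro integrable_real_indicator null_below_in_sets) (simp_all add: emeasure_eq_measure)
  have "a * q * real T = (\<integral>\<omega>. a * (\<Sum>t<T. indicator (null_below M Y p x t) \<omega>) \<partial>M)"
    using integrable_N
    by (simp add: Bochner_Integration.integral_sum sets.Int_space_eq2 null_below_in_sets prob_N mult_ac)
  also have "\<dots> \<le> (\<integral>\<omega>. weighted_regret a b Y p lam T \<omega> \<partial>M)"
  proof (rule integral_mono_AE)
    show "integrable M (\<lambda>\<omega>. a * (\<Sum>t<T. indicator (null_below M Y p x t) \<omega>))"
      by (intro integrable_mult_right Bochner_Integration.integrable_sum integrable_N)
    show "integrable M (weighted_regret a b Y p lam T)"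
      by (rule integrable_const_bound[where B = "(\<bar>a\<bar> + \<bar>b\<bar>) * real T"])
        (simp_all add: abs_weighted_regret_le weighted_regret_measurable)
    show "AE \<omega> in M. a * (\<Sum>t<T. indicator (null_below M Y p x t) \<omega>)
        \<le> weighted_regret a b Y p lam T \<omega>"
      using above by eventually_elim (simp add: weighted_regret_ge_null_below a_nonneg b_nonneg)
  qed
  finally show ?thesis .
qed

lemma AE_Liminf_weighted_regret_ge:
  assumes a_nonneg: "0 \<le> a" and b_nonneg: "0 \<le> b"
    and above: "AE \<omega> in M. \<forall>t. x \<le> lam t \<omega>"
    and freq: "AE \<omega> in M. (\<lambda>T. (\<Sum>t<T. indicator (null_below M Y p x t) \<omega>) / real T) \<longlonglongrightarrow> q"
  shows "AE \<omega> in M. ereal (a * q)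
    \<le> Liminf sequentially (\<lambda>T. ereal (weighted_regret a b Y p lam T \<omega> / real T))"
  using freq above
proof eventually_elim
  case (elim \<omega>)
  show ?case
  proof (rule Liminf_ereal_ge_of_tendsto)
    show "(\<lambda>T. a * ((\<Sum>t<T. indicator (null_below M Y p x t) \<omega>) / real T)) \<longlonglongrightarrow> a * q"
      using elim(1) by (rule tendsto_mult_left)
    have "a * (\<Sum>t<T. indicator (null_below M Y p x t) \<omega>) \<le> weighted_regret a b Y p lam T \<omega>"
      for T
      using elim(2) by (simp add: weighted_regret_ge_null_below a_nonneg b_nonneg)
    from divide_right_mono[OF this] show "\<forall>\<^sub>F T in sequentially.
        a * ((\<Sum>t<T. indicator (null_below M Y p x t) \<omega>) / real T)
          \<le> weighted_regret a b Y p lam T \<omega> / real T"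
      by simp
  qed simp
qed

theorem theorem1:
  fixes M :: "'a measure"
    and Y :: "nat \<Rightarrow> 'a \<Rightarrow> nat"
    and p lam :: "nat \<Rightarrow> 'a \<Rightarrow> real"
    and G :: "real \<Rightarrow> real"
    and \<pi> \<beta> lb a b :: real
  assumes M: "prob_space M"
    and G_cont: "continuous_on {0..1} G"
    and G_mono: "strict_mono_on {0..1} G"
    and G0: "G 0 = 0" and G1: "G 1 = 1"
    and pi: "0 < \<pi>" "\<pi> < 1"
    and Y_meas: "\<And>t. Y t \<in> measurable M (count_space UNIV)"
    and Y_vals: "\<And>t \<omega>. \<omega> \<in> space M \<Longrightarrow> Y t \<omega> \<in> {0, 1}"
    and Y_indep: "prob_space.indep_vars M (\<lambda>_. count_space UNIV) Y UNIV"
    and Y_null: "\<And>t. measure M {\<omega> \<in> space M. Y t \<omega> = 0} = \<pi>"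
    and p_meas: "\<And>t. p t \<in> borel_measurable M"
    and p_vals: "\<And>t \<omega>. \<omega> \<in> space M \<Longrightarrow> p t \<omega> \<in> {0..1}"
    and p_null: "\<And>t A x. A \<in> sets (cond_sigma M Y p lam t) \<Longrightarrow> 0 \<le> x \<Longrightarrow> x \<le> 1 \<Longrightarrow>
        measure M ({\<omega> \<in> space M. p t \<omega> \<le> x} \<inter> A \<inter> {\<omega> \<in> space M. Y t \<omega> = 0})
          = x * measure M (A \<inter> {\<omega> \<in> space M. Y t \<omega> = 0})"
    and p_alt: "\<And>t A x. A \<in> sets (cond_sigma M Y p lam t) \<Longrightarrow> 0 \<le> x \<Longrightarrow> x \<le> 1 \<Longrightarrow>
        measure M ({\<omega> \<in> space M. p t \<omega> \<le> x} \<inter> A \<inter> {\<omega> \<in> space M. Y t \<omega> = 1})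
          = G x * measure M (A \<inter> {\<omega> \<in> space M. Y t \<omega> = 1})"
    and lam_meas: "\<And>t. lam t \<in> borel_measurable (past_filtration M p lam t)"
    and lam_vals: "\<And>t \<omega>. \<omega> \<in> space M \<Longrightarrow> lam t \<omega> \<in> {0..1}"
    and beta: "0 < \<beta>" "\<beta> \<le> 1"
    and lb: "lb \<in> {0..1}" "G lb = \<beta>"
    and power: "\<And>t. AE \<omega> in M. G (lam t \<omega>) \<ge> \<beta>"
    and ab: "0 < a" "0 < b"
  shows "(\<forall>T\<ge>1. (\<integral>\<omega>. weighted_regret a b Y p lam T \<omega> \<partial>M) \<ge> a * \<pi> * lb * real T)
    \<and> (AE \<omega> in M. Liminf sequentially (\<lambda>T. ereal (weighted_regret a b Y p lam T \<omega> / real T))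
                    \<ge> ereal (a * \<pi> * lb))"
proof -
  interpret prob_space M by (rule M)
  have [measurable]: "lam t \<in> borel_measurable M" for t
    by (rule threshold_measurable[OF p_meas lam_meas])
  have lb01: "0 \<le> lb" "lb \<le> 1" using lb(1) by auto
  have a_nonneg: "0 \<le> a" and b_nonneg: "0 \<le> b" using ab by auto
  have above: "AE \<omega> in M. \<forall>t. lb \<le> lam t \<omega>"
    using G_mono lam_vals lb(1) power unfolding lb(2)[symmetric] by (rule AE_threshold_ge)
  have prob_N: "prob (null_below M Y p lb t) = lb * \<pi>" for t
    by (rule prob_null_below[OF p_null[OF _ lb01] Y_null])
  have "AE \<omega> in M. (\<lambda>T. (\<Sum>t<T. indicator (null_below M Y p lb t) \<omega>) / real T) \<longlonglongrightarrow> lb * \<pi>"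
    by (rule AE_frequency_tendsto_of_uncorrelated_events[OF null_below_in_sets[OF Y_meas p_meas]
          prob_N prob_null_below_Int[OF Y_indep Y_null p_null[OF _ lb01]]])
  from AE_Liminf_weighted_regret_ge[OF a_nonneg b_nonneg above this]
    and expectation_weighted_regret_ge[OF Y_meas p_meas _ a_nonneg b_nonneg above prob_N]
  show ?thesis by (simp add: mult_ac)
qed

end
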